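(* There is no smooth compact hypersurface without boundary $\Gamma_*\subset\mathbb{R}^d$ (with smooth unit normal field $\mathbf{n}$) satisfying the forward self-similar profile equation $\frac{x\cdot\mathbf{n}}{4} = -\Delta_{\Gamma_*}H$ on $\Gamma_*$.
   Context: For a function $f$ and vector field $X$ on a hypersurface $\Gamma$ with unit normal $\mathbf{n}$, $\nabla_\Gamma f = (I-\mathbf{n}\otimes\mathbf{n})\nabla f$, $\operatorname{div}_\Gamma X = \operatorname{trace}\big((I-\mathbf{n}\otimes\mathbf{n})DX\big)$, $\Delta_\Gamma = \operatorname{div}_\Gamma\nabla_\Gamma$, and $H := -\operatorname{div}_\Gamma\mathbf{n}$. Such $\Gamma_*$ would be the profile of a forward self-similar solution $\Gamma_t=t^{1/4}\Gamma_*$ of the surface diffusion flow $V=-\Delta_{\Gamma_t}H$. *)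

theory Defs
  imports "HOL-Analysis.Analysis"
begin

definition partial :: "'n::finite \<Rightarrow> (real^'n \<Rightarrow> real) \<Rightarrow> real^'n \<Rightarrow> real" where
  "partial i f x = deriv (\<lambda>t. f (x + t *\<^sub>R axis i 1)) 0"

fun iter_partial :: "'n::finite list \<Rightarrow> (real^'n \<Rightarrow> real) \<Rightarrow> real^'n \<Rightarrow> real" where
  "iter_partial [] f = f"
| "iter_partial (i # is) f = partial i (iter_partial is f)"

definition smooth_on :: "(real^'n::finite) set \<Rightarrow> (real^'n \<Rightarrow> real) \<Rightarrow> bool" where
  "smooth_on U f \<longleftrightarrow> (\<forall>is. \<forall>x\<in>U. iter_partial is f differentiable (at x))"

definition smooth_field_on :: "(real^'n::finite) set \<Rightarrow> (real^'n \<Rightarrow> real^'n) \<Rightarrow> bool" where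
  "smooth_field_on U X \<longleftrightarrow> (\<forall>j. smooth_on U (\<lambda>y. X y $ j))"

definition grad :: "(real^'n::finite \<Rightarrow> real) \<Rightarrow> real^'n \<Rightarrow> real^'n" where
  "grad f x = (\<chi> i. partial i f x)"

definition jac :: "(real^'n::finite \<Rightarrow> real^'n) \<Rightarrow> real^'n \<Rightarrow> real^'n^'n" where
  "jac X x = (\<chi> i j. partial j (\<lambda>y. X y $ i) x)"

definition proj :: "(real^'n::finite \<Rightarrow> real^'n) \<Rightarrow> real^'n \<Rightarrow> real^'n^'n" where
  "proj N x = mat 1 - (\<chi> i j. N x $ i * N x $ j)"

definition surf_grad :: "(real^'n::finite \<Rightarrow> real^'n) \<Rightarrow> (real^'n \<Rightarrow> real) \<Rightarrow> real^'n \<Rightarrow> real^'n" where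
  "surf_grad N f x = proj N x *v grad f x"

definition surf_div :: "(real^'n::finite \<Rightarrow> real^'n) \<Rightarrow> (real^'n \<Rightarrow> real^'n) \<Rightarrow> real^'n \<Rightarrow> real" where
  "surf_div N X x = trace (proj N x ** jac X x)"

definition surf_lap :: "(real^'n::finite \<Rightarrow> real^'n) \<Rightarrow> (real^'n \<Rightarrow> real) \<Rightarrow> real^'n \<Rightarrow> real" where
  "surf_lap N f = surf_div N (surf_grad N f)"

definition mean_curv :: "(real^'n::finite \<Rightarrow> real^'n) \<Rightarrow> real^'n \<Rightarrow> real" where
  "mean_curv N x = - surf_div N N x"

text \<open>N is a smooth unit normal field on Gamma, given via a smooth extension to an
  open neighbourhood U of Gamma (all tangential quantities on Gamma are independent of
  the extension).\<close>
definition smooth_hypersurface_normal :: "(real^'n::finite) set \<Rightarrow> (real^'n \<Rightarrow> real^'n) \<Rightarrow> bool" where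
  "smooth_hypersurface_normal \<Gamma> N \<longleftrightarrow>
     (\<exists>U. open U \<and> \<Gamma> \<subseteq> U \<and> smooth_field_on U N) \<and>
     (\<forall>p\<in>\<Gamma>. norm (N p) = 1 \<and>
        (\<exists>V \<phi>. open V \<and> p \<in> V \<and> smooth_on V \<phi> \<and>
           (\<forall>x\<in>V. grad \<phi> x \<noteq> 0) \<and>
           \<Gamma> \<inter> V = {x\<in>V. \<phi> x = 0} \<and>
           (\<forall>x\<in>\<Gamma> \<inter> V. \<exists>c. N x = c *\<^sub>R grad \<phi> x)))"

end

theory Submission
  imports Defs
begin

text \<open>Let \<open>g = |x|\<^sup>2 / 2 + 2 H\<^sup>2\<close> and let \<open>p\<close> be a point where \<open>g\<close> attains its maximum on the
  compact hypersurface \<open>\<Gamma>\<close>. Writing \<open>\<Gamma>\<close> near \<open>p\<close> as a regular level set and following curves in it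
  that leave \<open>p\<close> in a tangent direction, the first- and second-order Lagrange conditions give
  \<open>\<Delta>\<^sub>\<Gamma> g (p) \<le> 0\<close>. On the other hand \<open>\<Delta>\<^sub>\<Gamma> (|x|\<^sup>2 / 2) = (d - 1) + H (x \<bullet> n)\<close> and
  \<open>\<Delta>\<^sub>\<Gamma> (H\<^sup>2) = 2 |\<nabla>\<^sub>\<Gamma> H|\<^sup>2 + 2 H \<Delta>\<^sub>\<Gamma> H\<close>, so the profile equation \<open>x \<bullet> n = - 4 \<Delta>\<^sub>\<Gamma> H\<close> turns
  this into \<open>\<Delta>\<^sub>\<Gamma> g = (d - 1) + 4 |\<nabla>\<^sub>\<Gamma> H|\<^sup>2 \<ge> 1\<close>.\<close>

section \<open>Partial derivatives\<close>

lemma has_real_derivative_along_line: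
  fixes f :: "'a::real_normed_vector \<Rightarrow> real"
  assumes "(f has_derivative f') (at (a + \<tau> *\<^sub>R u))"
  shows "((\<lambda>s. f (a + s *\<^sub>R u)) has_real_derivative f' u) (at \<tau>)"
proof -
  have "((\<lambda>s. f (a + s *\<^sub>R u)) has_derivative (\<lambda>s. f' (s *\<^sub>R u))) (at \<tau>)"
    using assms by (auto intro!: derivative_eq_intros has_derivative_compose[of "\<lambda>s. a + s *\<^sub>R u" _ _ _ f])
  then have "((\<lambda>s. f (a + s *\<^sub>R u)) has_derivative (\<lambda>s. f' u * s)) (at \<tau>)"
    using has_derivative_linear[OF assms] by (simp add: linear_scale mult.commute)
  then show ?thesis by (simp add: has_field_derivative_def)
qed

lemma partial_eq_derivative:
  assumes "(f has_derivative f') (at x)"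
  shows "partial i f x = f' (axis i 1)"
  unfolding partial_def
  using has_real_derivative_along_line[of f f' x 0 "axis i 1"] assms by (simp add: DERIV_imp_deriv)

lemma grad_inner_axis [simp]: "grad f x \<bullet> axis i 1 = partial i f x"
  by (simp add: grad_def inner_axis)

lemma has_derivative_grad:
  assumes "f differentiable (at x)"
  shows "(f has_derivative (\<lambda>h. grad f x \<bullet> h)) (at x)"
proof -
  obtain f' where f': "(f has_derivative f') (at x)"
    using assms differentiable_def by blast
  have "f' h = grad f x \<bullet> h" for h
  proof -
    have "f' h = f' (\<Sum>i\<in>UNIV. h $ i *\<^sub>R axis i 1)"
      using basis_expansion[of h] by (simp add: scalar_mult_eq_scaleR)
    also have "\<dots> = (\<Sum>i\<in>UNIV. h $ i * partial i f x)"
      using has_derivative_linear[OF f'] partial_eq_derivative[OF f']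
      by (simp add: linear_sum linear_scale)
    finally show ?thesis by (simp add: grad_def inner_vec_def mult.commute)
  qed
  then show ?thesis using f' by (metis ext)
qed

lemma has_derivative_vec_field:
  assumes "\<And>k. (\<lambda>y. X y $ k) differentiable (at p)"
  shows "(X has_derivative (\<lambda>h. \<chi> k. grad (\<lambda>y. X y $ k) p \<bullet> h)) (at p)"
  unfolding has_derivative_componentwise_within[of X _ p UNIV]
  using has_derivative_grad[OF assms] by (auto simp: Basis_vec_def inner_axis)

lemma has_derivative_grad_field:
  assumes "\<And>i. partial i f differentiable (at p)"
  shows "(grad f has_derivative (\<lambda>h. \<chi> i. grad (partial i f) p \<bullet> h)) (at p)"
proof -
  have "(\<lambda>y. grad f y $ i) = partial i f" for i
    by (simp add: grad_def fun_eq_iff)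
  then show ?thesis using has_derivative_vec_field[of "grad f" p] assms by simp
qed

lemma partial_add:
  assumes "f differentiable (at x)" "g differentiable (at x)"
  shows "partial i (\<lambda>y. f y + g y) x = partial i f x + partial i g x"
  using partial_eq_derivative[OF has_derivative_add[OF assms[THEN has_derivative_grad]]] by simp

lemma partial_mult:
  assumes "f differentiable (at x)" "g differentiable (at x)"
  shows "partial i (\<lambda>y. f y * g y) x = partial i f x * g x + f x * partial i g x"
  using partial_eq_derivative[OF has_derivative_mult[OF assms[THEN has_derivative_grad]]] by simp

lemma partial_sum:
  assumes "finite A" "\<And>a. a \<in> A \<Longrightarrow> f a differentiable (at x)"
  shows "partial i (\<lambda>y. \<Sum>a\<in>A. f a y) x = (\<Sum>a\<in>A. partial i (f a) x)"
proof -
  have "((\<lambda>y. \<Sum>a\<in>A. f a y) has_derivative (\<lambda>h. \<Sum>a\<in>A. grad (f a) x \<bullet> h)) (at x)"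
    using assms(2) by (intro has_derivative_sum has_derivative_grad)
  then show ?thesis by (simp add: partial_eq_derivative)
qed

lemma differentiable_transform_open:
  assumes "f differentiable (at x)" "open U" "x \<in> U" "\<And>y. y \<in> U \<Longrightarrow> f y = g y"
  shows "g differentiable (at x)"
  using assms has_derivative_transform_within_open unfolding differentiable_def by blast

definition twice_differentiable_on :: "(real^'n::finite) set \<Rightarrow> (real^'n \<Rightarrow> real) \<Rightarrow> bool" where
  "twice_differentiable_on U f \<longleftrightarrow>
     (\<forall>x\<in>U. f differentiable (at x) \<and> (\<forall>i. partial i f differentiable (at x)))"

lemma twice_differentiable_onD:
  assumes "twice_differentiable_on U f" "x \<in> U"
  shows "f differentiable (at x)" "partial i f differentiable (at x)"
  using assms unfolding twice_differentiable_on_def by blast+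

lemma twice_differentiable_on_const: "twice_differentiable_on (U :: (real^'n) set) (\<lambda>y. c)"
proof -
  have "partial i (\<lambda>y. c) = (\<lambda>y::real^'n. 0)" for i
    using partial_eq_derivative[of "\<lambda>y. c" "\<lambda>h. 0" _ i] by (simp add: fun_eq_iff)
  then show ?thesis by (simp add: twice_differentiable_on_def)
qed

lemma twice_differentiable_on_add:
  assumes U: "open U" and f: "twice_differentiable_on U f" and g: "twice_differentiable_on U g"
  shows "twice_differentiable_on U (\<lambda>y. f y + g y)"
  unfolding twice_differentiable_on_def
proof (intro ballI conjI allI)
  fix x i assume x: "x \<in> U"
  note df = twice_differentiable_onD[OF f] and dg = twice_differentiable_onD[OF g]
  show "(\<lambda>y. f y + g y) differentiable (at x)"
    using df(1)[OF x] dg(1)[OF x] by (rule differentiable_add)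
  have "partial i f y + partial i g y = partial i (\<lambda>y. f y + g y) y" if "y \<in> U" for y
    using partial_add[OF df(1) dg(1), OF that that] by simp
  moreover have "(\<lambda>y. partial i f y + partial i g y) differentiable (at x)"
    using df(2)[OF x] dg(2)[OF x] by (rule differentiable_add)
  ultimately show "partial i (\<lambda>y. f y + g y) differentiable (at x)"
    using differentiable_transform_open U x by blast
qed

lemma twice_differentiable_on_mult:
  assumes U: "open U" and f: "twice_differentiable_on U f" and g: "twice_differentiable_on U g"
  shows "twice_differentiable_on U (\<lambda>y. f y * g y)"
  unfolding twice_differentiable_on_def
proof (intro ballI conjI allI)
  fix x i assume x: "x \<in> U"
  note df = twice_differentiable_onD[OF f] and dg = twice_differentiable_onD[OF g]
  show "(\<lambda>y. f y * g y) differentiable (at x)"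
    using df(1)[OF x] dg(1)[OF x] by (rule differentiable_mult)
  have "partial i f y * g y + f y * partial i g y = partial i (\<lambda>y. f y * g y) y" if "y \<in> U" for y
    using partial_mult[OF df(1) dg(1), OF that that] by simp
  moreover have "(\<lambda>y. partial i f y * g y + f y * partial i g y) differentiable (at x)"
    using df dg x by (intro differentiable_add differentiable_mult) auto
  ultimately show "partial i (\<lambda>y. f y * g y) differentiable (at x)"
    using differentiable_transform_open U x by blast
qed

lemma twice_differentiable_on_diff:
  assumes "open U" "twice_differentiable_on U f" "twice_differentiable_on U g"
  shows "twice_differentiable_on U (\<lambda>y. f y - g y)"
proof -
  have "twice_differentiable_on U (\<lambda>y. f y + (- 1) * g y)"
    using assms by (intro twice_differentiable_on_add twice_differentiable_on_mult twice_differentiable_on_const)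
  then show ?thesis by simp
qed

lemma twice_differentiable_on_uminus:
  assumes "open U" "twice_differentiable_on U f"
  shows "twice_differentiable_on U (\<lambda>y. - f y)"
  using twice_differentiable_on_diff[OF assms(1) twice_differentiable_on_const assms(2), of 0] by simp

lemma twice_differentiable_on_sum:
  assumes "open U" "finite A" "\<And>a. a \<in> A \<Longrightarrow> twice_differentiable_on U (f a)"
  shows "twice_differentiable_on U (\<lambda>y. \<Sum>a\<in>A. f a y)"
  using assms(2,3)
proof (induction A rule: finite_induct)
  case empty
  show ?case using twice_differentiable_on_const[of U 0] by simp
next
  case (insert a A)
  then show ?case by (simp add: twice_differentiable_on_add[OF assms(1)])
qed

lemma smooth_on_imp_twice_differentiable_on:
  assumes "smooth_on U f"
  shows "twice_differentiable_on U f" and "twice_differentiable_on U (partial i f)"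
  using assms iter_partial.simps unfolding smooth_on_def twice_differentiable_on_def
  by (metis (no_types))+

section \<open>Tangential calculus\<close>

definition tan_proj :: "real^'n::finite \<Rightarrow> 'n \<Rightarrow> 'n \<Rightarrow> real" where
  "tan_proj n i j = (if i = j then 1 else 0) - n $ i * n $ j"

lemma proj_eq_tan_proj: "proj N x $ i $ j = tan_proj (N x) i j"
  by (simp add: proj_def tan_proj_def mat_def)

lemma tan_proj_sym: "tan_proj n i j = tan_proj n j i"
  unfolding tan_proj_def by auto

lemma tan_proj_normal:
  assumes "n \<bullet> n = 1"
  shows "(\<Sum>k\<in>UNIV. tan_proj n i k * n $ k) = 0"
proof -
  have "(\<Sum>k\<in>UNIV. tan_proj n i k * n $ k)
      = (\<Sum>k\<in>UNIV. (if i = k then n $ k else 0) - n $ i * (n $ k * n $ k))"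
    by (rule sum.cong) (auto simp: tan_proj_def algebra_simps)
  also have "\<dots> = n $ i - n $ i * (n \<bullet> n)"
    by (simp add: sum_subtractf sum_distrib_left inner_vec_def)
  finally show ?thesis using assms by simp
qed

lemma tan_proj_idem:
  assumes "n \<bullet> n = 1"
  shows "(\<Sum>k\<in>UNIV. tan_proj n i k * tan_proj n k j) = tan_proj n i j"
proof -
  have "(\<Sum>k\<in>UNIV. tan_proj n i k * tan_proj n k j)
      = (\<Sum>k\<in>UNIV. tan_proj n i k * (if k = j then 1 else 0)) - (\<Sum>k\<in>UNIV. tan_proj n i k * n $ k) * n $ j"
    unfolding tan_proj_def[of n _ j]
    by (simp add: algebra_simps sum_subtractf sum_distrib_right sum_distrib_left)
  then show ?thesis
    using tan_proj_normal[OF assms] by (simp add: if_distrib cong: if_cong)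
qed

lemma tan_proj_trace:
  fixes n :: "real^'n"
  assumes "n \<bullet> n = 1"
  shows "(\<Sum>i\<in>UNIV. tan_proj n i i) = real CARD('n) - 1"
  using assms by (simp add: tan_proj_def sum_subtractf inner_vec_def)

lemma tan_proj_quadratic_form:
  assumes "n \<bullet> n = 1"
  shows "(\<Sum>i\<in>UNIV. \<Sum>j\<in>UNIV. tan_proj n i j * (a i * a j))
    = (\<Sum>k\<in>UNIV. (\<Sum>j\<in>UNIV. tan_proj n k j * a j)\<^sup>2)"
proof -
  have idem: "(\<Sum>k\<in>UNIV. tan_proj n k i * tan_proj n k j) = tan_proj n i j" for i j
    using tan_proj_idem[OF assms, of i j] by (simp add: tan_proj_sym[of n i])
  have "(\<Sum>k\<in>UNIV. (\<Sum>j\<in>UNIV. tan_proj n k j * a j)\<^sup>2)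
      = (\<Sum>k\<in>UNIV. \<Sum>i\<in>UNIV. \<Sum>j\<in>UNIV. tan_proj n k i * tan_proj n k j * (a i * a j))"
    by (simp add: power2_eq_square sum_product algebra_simps)
  also have "\<dots> = (\<Sum>i\<in>UNIV. \<Sum>j\<in>UNIV. (\<Sum>k\<in>UNIV. tan_proj n k i * tan_proj n k j) * (a i * a j))"
    by (subst sum.swap, rule sum.cong[OF refl], subst sum.swap) (simp add: sum_distrib_right)
  finally show ?thesis by (simp add: idem)
qed

lemma tan_proj_frame_sum:
  assumes "n \<bullet> n = 1"
  shows "(\<Sum>a\<in>UNIV. \<Sum>i\<in>UNIV. \<Sum>j\<in>UNIV. tan_proj n i a * X i j * tan_proj n j a)
    = (\<Sum>i\<in>UNIV. \<Sum>j\<in>UNIV. tan_proj n i j * X i j)"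
proof -
  have idem: "(\<Sum>a\<in>UNIV. tan_proj n i a * tan_proj n j a) = tan_proj n i j" for i j
    using tan_proj_idem[OF assms, of i j] by (simp add: tan_proj_sym[of n j])
  have "(\<Sum>a\<in>UNIV. \<Sum>i\<in>UNIV. \<Sum>j\<in>UNIV. tan_proj n i a * X i j * tan_proj n j a)
      = (\<Sum>i\<in>UNIV. \<Sum>j\<in>UNIV. X i j * (\<Sum>a\<in>UNIV. tan_proj n i a * tan_proj n j a))"
    by (subst sum.swap, rule sum.cong[OF refl], subst sum.swap) (simp add: sum_distrib_left algebra_simps)
  then show ?thesis by (simp add: idem mult.commute)
qed

lemma surf_grad_nth: "surf_grad N f y $ k = (\<Sum>j\<in>UNIV. tan_proj (N y) k j * partial j f y)"
  by (simp add: surf_grad_def matrix_vector_mult_def grad_def proj_eq_tan_proj)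

lemma mean_curv_eq:
  "mean_curv N p = - (\<Sum>i\<in>UNIV. \<Sum>k\<in>UNIV. tan_proj (N p) i k * partial i (\<lambda>y. N y $ k) p)"
  by (simp add: mean_curv_def surf_div_def trace_def matrix_matrix_mult_def proj_eq_tan_proj jac_def)

lemma partial_surf_grad_nth:
  assumes N: "\<And>k. (\<lambda>y. N y $ k) differentiable (at p)" and f: "\<And>j. partial j f differentiable (at p)"
  shows "partial i (\<lambda>y. surf_grad N f y $ k) p
    = (\<Sum>j\<in>UNIV. - (partial i (\<lambda>y. N y $ k) p * N p $ j + N p $ k * partial i (\<lambda>y. N y $ j) p)
        * partial j f p + tan_proj (N p) k j * partial i (partial j f) p)"
proof -
  have P_diff: "(\<lambda>y. tan_proj (N y) k j) differentiable (at p)" for j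
    unfolding tan_proj_def using N by (intro differentiable_diff differentiable_mult differentiable_const)
  have "((\<lambda>y. tan_proj (N y) k j) has_derivative
      (\<lambda>h. - ((grad (\<lambda>y. N y $ k) p \<bullet> h) * N p $ j + N p $ k * (grad (\<lambda>y. N y $ j) p \<bullet> h)))) (at p)" for j
    unfolding tan_proj_def using N[THEN has_derivative_grad]
    by (auto intro!: derivative_eq_intros simp: algebra_simps)
  from partial_eq_derivative[OF this]
  have "partial i (\<lambda>y. tan_proj (N y) k j) p
      = - (partial i (\<lambda>y. N y $ k) p * N p $ j + N p $ k * partial i (\<lambda>y. N y $ j) p)" for j
    by simp
  then show ?thesis
    unfolding surf_grad_nth using P_diff f by (simp add: partial_sum partial_mult differentiable_mult)
qed

lemma twice_differentiable_on_mean_curv: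
  assumes U: "open U" and N: "smooth_field_on U N"
  shows "twice_differentiable_on U (mean_curv N)"
proof -
  have N_k: "twice_differentiable_on U (\<lambda>y. N y $ k)" "twice_differentiable_on U (partial i (\<lambda>y. N y $ k))"
    for i k using N smooth_on_imp_twice_differentiable_on unfolding smooth_field_on_def by blast+
  have "twice_differentiable_on U (\<lambda>y. tan_proj (N y) i k * partial i (\<lambda>y. N y $ k) y)" for i k
    unfolding tan_proj_def using N_k
    by (intro twice_differentiable_on_mult twice_differentiable_on_diff twice_differentiable_on_const U)
  then have "twice_differentiable_on U
      (\<lambda>y. - (\<Sum>i\<in>UNIV. \<Sum>k\<in>UNIV. tan_proj (N y) i k * partial i (\<lambda>y. N y $ k) y))"
    by (intro twice_differentiable_on_uminus twice_differentiable_on_sum U finite)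
  then show ?thesis by (simp flip: mean_curv_eq)
qed

lemma surf_lap_eq:
  assumes N: "\<And>k. (\<lambda>y. N y $ k) differentiable (at p)"
    and f: "\<And>j. partial j f differentiable (at p)" and unit: "norm (N p) = 1"
  shows "surf_lap N f p = (\<Sum>i\<in>UNIV. \<Sum>j\<in>UNIV. tan_proj (N p) i j * partial i (partial j f) p)
      + mean_curv N p * (N p \<bullet> grad f p)"
proof -
  let ?P = "tan_proj (N p)" and ?dN = "\<lambda>i k. partial i (\<lambda>y. N y $ k) p"
  have nn: "N p \<bullet> N p = 1" using unit by (simp add: norm_eq_1)
  have d_surf_grad: "partial i (\<lambda>y. surf_grad N f y $ k) p
      = (\<Sum>j\<in>UNIV. - (?dN i k * N p $ j + N p $ k * ?dN i j) * partial j f p + ?P k j * partial i (partial j f) p)"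
    for i k using partial_surf_grad_nth[OF N f] .
  have "surf_lap N f p = (\<Sum>i\<in>UNIV. \<Sum>k\<in>UNIV. ?P i k * partial i (\<lambda>y. surf_grad N f y $ k) p)"
    by (simp add: surf_lap_def surf_div_def trace_def matrix_matrix_mult_def proj_eq_tan_proj jac_def)
  also have "\<dots> = (\<Sum>i\<in>UNIV. \<Sum>j\<in>UNIV. (\<Sum>k\<in>UNIV. ?P i k * ?P k j) * partial i (partial j f) p)
      - (\<Sum>i\<in>UNIV. \<Sum>k\<in>UNIV. ?P i k * ?dN i k) * (N p \<bullet> grad f p)
      - (\<Sum>i\<in>UNIV. (\<Sum>k\<in>UNIV. ?P i k * N p $ k) * (\<Sum>j\<in>UNIV. ?dN i j * partial j f p))"
  proof -
    have "?P i k * (\<Sum>j\<in>UNIV. - (?dN i k * N p $ j + N p $ k * ?dN i j) * partial j f p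
          + ?P k j * partial i (partial j f) p)
        = (\<Sum>j\<in>UNIV. ?P i k * ?P k j * partial i (partial j f) p)
          - ?P i k * ?dN i k * (N p \<bullet> grad f p) - ?P i k * N p $ k * (\<Sum>j\<in>UNIV. ?dN i j * partial j f p)"
      for i k
      by (simp add: inner_vec_def grad_def sum.distrib sum_subtractf sum_distrib_left sum_negf algebra_simps)
    moreover have "(\<Sum>k\<in>UNIV. \<Sum>j\<in>UNIV. ?P i k * ?P k j * partial i (partial j f) p)
        = (\<Sum>j\<in>UNIV. (\<Sum>k\<in>UNIV. ?P i k * ?P k j) * partial i (partial j f) p)" for i
      by (subst sum.swap) (simp add: sum_distrib_right)
    ultimately show ?thesis
      unfolding d_surf_grad by (simp add: sum_subtractf sum_distrib_right)
  qed
  also have "\<dots> = (\<Sum>i\<in>UNIV. \<Sum>j\<in>UNIV. ?P i j * partial i (partial j f) p)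
      + mean_curv N p * (N p \<bullet> grad f p)"
    by (simp add: tan_proj_idem[OF nn] tan_proj_normal[OF nn] mean_curv_eq)
  finally show ?thesis .
qed

definition energy :: "(real^'n::finite \<Rightarrow> real) \<Rightarrow> real^'n \<Rightarrow> real" where
  "energy F y = y \<bullet> y / 2 + 2 * (F y)\<^sup>2"

lemma has_derivative_energy:
  assumes "F differentiable (at y)"
  shows "(energy F has_derivative (\<lambda>h. y \<bullet> h + 4 * F y * (grad F y \<bullet> h))) (at y)"
  unfolding energy_def[abs_def] using has_derivative_grad[OF assms]
  by (auto intro!: derivative_eq_intros simp: inner_commute algebra_simps)

lemma partial_energy:
  assumes "F differentiable (at y)"
  shows "partial i (energy F) y = y $ i + 4 * F y * partial i F y"
  using partial_eq_derivative[OF has_derivative_energy[OF assms]] by (simp add: inner_axis grad_def)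

lemma has_derivative_partial_energy:
  assumes U: "open U" and F: "twice_differentiable_on U F" and y: "y \<in> U"
  shows "(partial i (energy F) has_derivative
      (\<lambda>h. h $ i + 4 * ((grad F y \<bullet> h) * partial i F y + F y * (grad (partial i F) y \<bullet> h)))) (at y)"
proof (rule has_derivative_transform_within_open[OF _ U y])
  show "((\<lambda>x. x $ i + 4 * F x * partial i F x) has_derivative
      (\<lambda>h. h $ i + 4 * ((grad F y \<bullet> h) * partial i F y + F y * (grad (partial i F) y \<bullet> h)))) (at y)"
    using twice_differentiable_onD[OF F y, THEN has_derivative_grad]
    by (auto intro!: derivative_eq_intros bounded_linear_imp_has_derivative bounded_linear_vec_nth
        simp: algebra_simps)
  show "x \<in> U \<Longrightarrow> x $ i + 4 * F x * partial i F x = partial i (energy F) x" for x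
    using partial_energy twice_differentiable_onD(1)[OF F] by metis
qed

lemma twice_differentiable_on_energy:
  assumes "open U" "twice_differentiable_on U F"
  shows "twice_differentiable_on U (energy F)"
  unfolding twice_differentiable_on_def differentiable_def
  using has_derivative_energy has_derivative_partial_energy[OF assms] twice_differentiable_onD(1)[OF assms(2)]
  by blast

lemma partial_partial_energy:
  assumes "open U" "twice_differentiable_on U F" "y \<in> U"
  shows "partial j (partial i (energy F)) y
    = (if i = j then 1 else 0) + 4 * (partial j F y * partial i F y + F y * partial j (partial i F) y)"
  using partial_eq_derivative[OF has_derivative_partial_energy[OF assms, of i], of j]
  by simp (simp add: axis_def)

lemma surf_lap_energy:
  fixes N :: "real^'n \<Rightarrow> real^'n"
  assumes U: "open U" and F: "twice_differentiable_on U F" and p: "p \<in> U"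
    and N: "\<And>k. (\<lambda>y. N y $ k) differentiable (at p)" and unit: "norm (N p) = 1"
  shows "surf_lap N (energy F) p = real CARD('n) - 1 + 4 * (norm (surf_grad N F p))\<^sup>2
      + 4 * F p * surf_lap N F p + mean_curv N p * (p \<bullet> N p)"
proof -
  let ?P = "tan_proj (N p)"
  have nn: "N p \<bullet> N p = 1" using unit by (simp add: norm_eq_1)
  have lap_F: "surf_lap N F p = (\<Sum>i\<in>UNIV. \<Sum>j\<in>UNIV. ?P i j * partial i (partial j F) p)
      + mean_curv N p * (N p \<bullet> grad F p)"
    using surf_lap_eq[OF N twice_differentiable_onD(2)[OF F p] unit] .
  have lap_E: "surf_lap N (energy F) p
      = (\<Sum>i\<in>UNIV. \<Sum>j\<in>UNIV. ?P i j * partial i (partial j (energy F)) p)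
        + mean_curv N p * (N p \<bullet> grad (energy F) p)"
    using surf_lap_eq[OF N twice_differentiable_onD(2)[OF twice_differentiable_on_energy[OF U F] p] unit] .
  have grad_E: "N p \<bullet> grad (energy F) p = p \<bullet> N p + 4 * F p * (N p \<bullet> grad F p)"
    using partial_energy[OF twice_differentiable_onD(1)[OF F p]]
    by (simp add: grad_def inner_vec_def sum.distrib sum_distrib_left algebra_simps)
  have "(\<Sum>i\<in>UNIV. \<Sum>j\<in>UNIV. ?P i j * partial i (partial j (energy F)) p)
      = (\<Sum>i\<in>UNIV. \<Sum>j\<in>UNIV. (if j = i then ?P i j else 0)
          + 4 * (?P i j * (partial i F p * partial j F p)) + 4 * F p * (?P i j * partial i (partial j F) p))"
    by (intro sum.cong refl) (simp add: partial_partial_energy[OF U F p] algebra_simps)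
  also have "\<dots> = (\<Sum>i\<in>UNIV. ?P i i) + 4 * (\<Sum>i\<in>UNIV. \<Sum>j\<in>UNIV. ?P i j * (partial i F p * partial j F p))
        + 4 * F p * (\<Sum>i\<in>UNIV. \<Sum>j\<in>UNIV. ?P i j * partial i (partial j F) p)"
    by (simp add: sum.distrib sum_distrib_left)
  also have "(\<Sum>i\<in>UNIV. \<Sum>j\<in>UNIV. ?P i j * (partial i F p * partial j F p)) = (norm (surf_grad N F p))\<^sup>2"
  proof -
    have "(norm (surf_grad N F p))\<^sup>2 = (\<Sum>k\<in>UNIV. (surf_grad N F p $ k)\<^sup>2)"
      unfolding power2_norm_eq_inner by (simp add: inner_vec_def power2_eq_square)
    then show ?thesis by (simp add: tan_proj_quadratic_form[OF nn] surf_grad_nth)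
  qed
  finally show ?thesis
    using lap_F lap_E grad_E tan_proj_trace[OF nn] by (simp add: algebra_simps)
qed

section \<open>Second-order conditions on a regular level set\<close>

lemma taylor2_remainder_bound:
  fixes f :: "'a::real_inner \<Rightarrow> real"
  assumes W: "open W" "p \<in> W" and f: "\<And>x. x \<in> W \<Longrightarrow> (f has_derivative (\<lambda>h. D x \<bullet> h)) (at x)"
    and D: "(D has_derivative D') (at p)" and e: "e > 0"
  shows "\<exists>d>0. \<forall>y. norm y < d \<longrightarrow> \<bar>f (p + y) - f p - D p \<bullet> y - (D' y \<bullet> y) / 2\<bar> \<le> e * (norm y)\<^sup>2"
proof -
  obtain d1 where d1: "d1 > 0" "\<And>z. norm (z - p) < d1 \<Longrightarrow> norm (D z - D p - D' (z - p)) \<le> e * norm (z - p)"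
    using D e unfolding has_derivative_at_alt by blast
  obtain d2 where d2: "d2 > 0" "ball p d2 \<subseteq> W" using W open_contains_ball by blast
  show ?thesis
  proof (intro exI[of _ "min d1 d2"] conjI allI impI)
    show "min d1 d2 > 0" using d1 d2 by simp
    fix y :: 'a assume y: "norm y < min d1 d2"
    define k where "k \<tau> = f (p + \<tau> *\<^sub>R y) - \<tau> * (D p \<bullet> y) - \<tau>\<^sup>2 / 2 * (D' y \<bullet> y)" for \<tau>
    define k' where "k' \<tau> = D (p + \<tau> *\<^sub>R y) \<bullet> y - D p \<bullet> y - \<tau> * (D' y \<bullet> y)" for \<tau>
    have k': "(k has_real_derivative k' \<tau>) (at \<tau>)" if "0 \<le> \<tau>" "\<tau> \<le> 1" for \<tau>
    proof -
      have "norm (\<tau> *\<^sub>R y) \<le> norm y" using that by (simp add: mult_left_le_one_le)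
      then have "p + \<tau> *\<^sub>R y \<in> W" using d2 y by (auto simp: dist_norm)
      then have "((\<lambda>s. f (p + s *\<^sub>R y)) has_real_derivative (D (p + \<tau> *\<^sub>R y) \<bullet> y)) (at \<tau>)"
        using has_real_derivative_along_line f by blast
      then show ?thesis unfolding k_def k'_def by (auto intro!: derivative_eq_intros)
    qed
    obtain z where z: "0 < z" "z < 1" "k 1 - k 0 = k' z"
      using MVT2[of 0 1 k k'] k' by auto
    have nz: "norm (z *\<^sub>R y) \<le> norm y" using z by (simp add: mult_left_le_one_le)
    have "k' z = (D (p + z *\<^sub>R y) - D p - D' (z *\<^sub>R y)) \<bullet> y"
      unfolding k'_def using has_derivative_linear[OF D] by (simp add: linear_scale inner_diff_left)
    also have "\<bar>\<dots>\<bar> \<le> norm (D (p + z *\<^sub>R y) - D p - D' (z *\<^sub>R y)) * norm y"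
      by (rule Cauchy_Schwarz_ineq2)
    also have "\<dots> \<le> (e * norm (z *\<^sub>R y)) * norm y"
      using d1(2)[of "p + z *\<^sub>R y"] nz y by (intro mult_right_mono) auto
    also have "\<dots> \<le> (e * norm y) * norm y"
      using nz e by (intro mult_right_mono mult_left_mono) auto
    finally have "\<bar>k' z\<bar> \<le> e * (norm y)\<^sup>2" by (simp add: power2_eq_square mult.assoc)
    moreover have "k 1 - k 0 = f (p + y) - f p - D p \<bullet> y - (D' y \<bullet> y) / 2"
      unfolding k_def by simp
    ultimately show "\<bar>f (p + y) - f p - D p \<bullet> y - (D' y \<bullet> y) / 2\<bar> \<le> e * (norm y)\<^sup>2"
      using z(3) by simp
  qed
qed

lemma taylor2_remainder_tendsto:
  fixes f :: "'a::real_inner \<Rightarrow> real"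
  assumes "open W" "p \<in> W" "\<And>x. x \<in> W \<Longrightarrow> (f has_derivative (\<lambda>h. D x \<bullet> h)) (at x)"
    and "(D has_derivative D') (at p)"
  shows "((\<lambda>y. (f y - f p - D p \<bullet> (y - p) - (D' (y - p) \<bullet> (y - p)) / 2) / (norm (y - p))\<^sup>2)
    \<longlongrightarrow> 0) (at p)"
proof -
  define X where "X y = f y - f p - D p \<bullet> (y - p) - (D' (y - p) \<bullet> (y - p)) / 2" for y
  have "((\<lambda>y. X y / (norm (y - p))\<^sup>2) \<longlongrightarrow> 0) (at p)"
  proof (rule tendstoI)
    fix e :: real assume e: "e > 0"
    then obtain d where d: "d > 0"
      "\<And>y. norm y < d \<Longrightarrow> \<bar>f (p + y) - f p - D p \<bullet> y - (D' y \<bullet> y) / 2\<bar> \<le> e / 2 * (norm y)\<^sup>2"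
      using taylor2_remainder_bound[OF assms, of "e / 2"] by auto
    have "dist (X y / (norm (y - p))\<^sup>2) 0 < e" if "y \<noteq> p" "dist y p < d" for y
    proof -
      have "\<bar>X y\<bar> \<le> e / 2 * (norm (y - p))\<^sup>2"
        using d(2)[of "y - p"] that unfolding X_def by (simp add: dist_norm)
      then have "\<bar>X y\<bar> / (norm (y - p))\<^sup>2 \<le> e / 2"
        using that(1) by (simp add: divide_le_eq)
      moreover have "dist (X y / (norm (y - p))\<^sup>2) 0 = \<bar>X y\<bar> / (norm (y - p))\<^sup>2"
        by (simp add: abs_divide)
      ultimately show ?thesis using e by linarith
    qed
    then show "eventually (\<lambda>y. dist (X y / (norm (y - p))\<^sup>2) 0 < e) (at p)"
      unfolding eventually_at using d(1) by blast
  qed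
  then show ?thesis unfolding X_def .
qed

lemma taylor1_remainder_bound:
  fixes f :: "'a::real_inner \<Rightarrow> real"
  assumes "open W" "p \<in> W" "\<And>x. x \<in> W \<Longrightarrow> (f has_derivative (\<lambda>h. D x \<bullet> h)) (at x)"
    and D: "(D has_derivative D') (at p)"
  shows "\<exists>r>0. \<exists>K>0. \<forall>y. norm y < r \<longrightarrow> \<bar>f (p + y) - f p - D p \<bullet> y\<bar> \<le> K * (norm y)\<^sup>2"
proof -
  obtain r where r: "r > 0"
    "\<And>y. norm y < r \<Longrightarrow> \<bar>f (p + y) - f p - D p \<bullet> y - (D' y \<bullet> y) / 2\<bar> \<le> 1 * (norm y)\<^sup>2"
    using taylor2_remainder_bound[OF assms zero_less_one] by blast
  obtain B where B: "B > 0" "\<And>h. norm (D' h) \<le> norm h * B"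
    using bounded_linear.pos_bounded[OF has_derivative_bounded_linear[OF D]] by blast
  have DB: "\<bar>D' y \<bullet> y\<bar> \<le> B * (norm y)\<^sup>2" for y
  proof -
    have "\<bar>D' y \<bullet> y\<bar> \<le> norm (D' y) * norm y" by (rule Cauchy_Schwarz_ineq2)
    also have "\<dots> \<le> (norm y * B) * norm y" by (intro mult_right_mono B(2)) auto
    finally show ?thesis by (simp add: power2_eq_square algebra_simps)
  qed
  have "\<bar>f (p + y) - f p - D p \<bullet> y\<bar> \<le> (B / 2 + 1) * (norm y)\<^sup>2" if "norm y < r" for y
    using r(2)[OF that] DB[of y] by (simp add: algebra_simps abs_le_iff)
  then show ?thesis using r(1) B(1) by (intro exI[of _ r] conjI exI[of _ "B / 2 + 1"]) auto
qed

lemma zero_of_perturbed_linear: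
  fixes f :: "real \<Rightarrow> real"
  assumes "continuous_on {- S..S} f" "0 \<le> S"
    and "\<And>s. \<bar>s\<bar> \<le> S \<Longrightarrow> \<bar>f s - c * s\<bar> \<le> E" and "E \<le> c * S"
  shows "\<exists>s. \<bar>s\<bar> \<le> S \<and> f s = 0"
proof -
  have "f (- S) \<le> 0" "0 \<le> f S"
    using assms(3)[of "- S"] assms(3)[of S] assms(2,4) by (auto simp: abs_le_iff)
  then obtain s where "- S \<le> s" "s \<le> S" "f s = 0"
    using IVT'[of f "- S" 0 S] assms(1,2) by auto
  then show ?thesis by (intro exI[of _ s]) auto
qed

lemma level_set_point_near_tangent_line:
  fixes \<phi> :: "'a::real_inner \<Rightarrow> real"
  assumes cont: "continuous_on (ball p r) \<phi>"
    and taylor: "\<And>y. norm y < r \<Longrightarrow> \<bar>\<phi> (p + y) - w \<bullet> y\<bar> \<le> K * (norm y)\<^sup>2"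
    and w: "w \<noteq> 0" and v: "v \<bullet> w = 0" and K: "0 \<le> K"
    and t: "0 < t" "t * (norm v + 1) < r" and small: "2 * K * (norm v + 1)\<^sup>2 * t \<le> norm w"
  shows "\<exists>q\<in>ball p r. \<phi> q = 0 \<and> norm (q - p - t *\<^sub>R v) \<le> 2 * K * (norm v + 1)\<^sup>2 / norm w * t\<^sup>2"
proof -
  \<comment> \<open>On the normal line \<open>s \<mapsto> p + t v + s w\<close> the function \<open>\<phi>\<close> stays within \<open>K (t M)\<^sup>2\<close> of
    \<open>s |w|\<^sup>2\<close>, so it changes sign for \<open>|s| \<le> S = O(t\<^sup>2)\<close>.\<close>
  define M where "M = norm v + 1"
  define S where "S = 2 * K * M\<^sup>2 * t\<^sup>2 / (norm w)\<^sup>2"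
  define y where "y s = t *\<^sub>R v + s *\<^sub>R w" for s
  have nw: "norm w > 0" using w by simp
  have S: "0 \<le> S" unfolding S_def using K by simp
  have "2 * K * M\<^sup>2 * t * t \<le> norm w * t" using mult_right_mono[OF small] t(1) unfolding M_def by simp
  then have Sw: "S * norm w \<le> t"
    using nw unfolding S_def by (simp add: field_simps power2_eq_square)
  have ny: "norm (y s) \<le> t * M" if "\<bar>s\<bar> \<le> S" for s
  proof -
    have "norm (y s) \<le> t * norm v + \<bar>s\<bar> * norm w"
      unfolding y_def using norm_triangle_ineq[of "t *\<^sub>R v" "s *\<^sub>R w"] t by simp
    also have "\<dots> \<le> t * norm v + t" using mult_right_mono[OF that, of "norm w"] Sw by simp
    finally show ?thesis unfolding M_def by (simp add: algebra_simps)
  qed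
  have in_ball: "p + y s \<in> ball p r" if "\<bar>s\<bar> \<le> S" for s
    using ny[OF that] t(2) unfolding M_def by (simp add: dist_norm)
  have linear_part: "\<bar>\<phi> (p + y s) - (norm w)\<^sup>2 * s\<bar> \<le> K * t\<^sup>2 * M\<^sup>2" if "\<bar>s\<bar> \<le> S" for s
  proof -
    have "w \<bullet> y s = (norm w)\<^sup>2 * s"
      using v unfolding y_def by (simp add: inner_add_right inner_commute power2_norm_eq_inner)
    moreover have "K * (norm (y s))\<^sup>2 \<le> K * t\<^sup>2 * M\<^sup>2"
      using ny[OF that] K by (simp add: mult_left_mono power_mono power_mult_distrib[symmetric] mult.assoc)
    moreover have "\<bar>\<phi> (p + y s) - w \<bullet> y s\<bar> \<le> K * (norm (y s))\<^sup>2"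
      using taylor in_ball[OF that] by (simp add: dist_norm)
    ultimately show ?thesis by simp
  qed
  have "continuous_on {- S..S} (\<lambda>s. \<phi> (p + y s))"
    using in_ball unfolding y_def
    by (intro continuous_on_compose2[OF cont] continuous_intros) auto
  moreover have "K * t\<^sup>2 * M\<^sup>2 \<le> (norm w)\<^sup>2 * S"
    using nw K unfolding S_def by (simp add: field_simps)
  ultimately obtain s where s: "\<bar>s\<bar> \<le> S" and root: "\<phi> (p + y s) = 0"
    using zero_of_perturbed_linear[OF _ S linear_part] by blast
  have "norm (p + y s - p - t *\<^sub>R v) = \<bar>s\<bar> * norm w" unfolding y_def by simp
  also have "\<dots> \<le> 2 * K * M\<^sup>2 / norm w * t\<^sup>2"
    using mult_right_mono[OF s, of "norm w"] nw unfolding S_def by (simp add: field_simps power2_eq_square)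
  finally show ?thesis using in_ball[OF s] root unfolding M_def by blast
qed

lemma level_set_near_tangent_line:
  fixes \<phi> :: "'a::real_inner \<Rightarrow> real"
  assumes W: "open W" "p \<in> W" and \<phi>: "\<And>x. x \<in> W \<Longrightarrow> (\<phi> has_derivative (\<lambda>h. \<Phi> x \<bullet> h)) (at x)"
    and \<Phi>: "(\<Phi> has_derivative \<Phi>') (at p)"
    and \<phi>p: "\<phi> p = 0" and w: "\<Phi> p \<noteq> 0" and v: "v \<bullet> \<Phi> p = 0"
  shows "\<exists>\<delta>>0. \<exists>C. \<forall>t. 0 < t \<and> t < \<delta> \<longrightarrow> (\<exists>q\<in>W. \<phi> q = 0 \<and> norm (q - p - t *\<^sub>R v) \<le> C * t\<^sup>2)"
proof -
  obtain r1 K where r1: "r1 > 0" and K: "K > 0"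
    and taylor: "\<And>y. norm y < r1 \<Longrightarrow> \<bar>\<phi> (p + y) - \<Phi> p \<bullet> y\<bar> \<le> K * (norm y)\<^sup>2"
    using taylor1_remainder_bound[OF W \<phi> \<Phi>] \<phi>p by auto
  obtain r2 where r2: "r2 > 0" "ball p r2 \<subseteq> W" using W open_contains_ball by blast
  define r where "r = min r1 r2"
  define M where "M = norm v + 1"
  have M: "M > 0" unfolding M_def by (simp add: add_nonneg_pos)
  have ball: "ball p r \<subseteq> W" using r2 unfolding r_def by auto
  have "continuous_on (ball p r) \<phi>"
    using ball \<phi> by (intro continuous_at_imp_continuous_on ballI has_derivative_continuous) blast
  note near = level_set_point_near_tangent_line[OF this _ w v less_imp_le[OF K]]
  define \<delta> where "\<delta> = min (r / M) (norm (\<Phi> p) / (2 * K * M\<^sup>2))"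
  have \<delta>: "\<delta> > 0" unfolding \<delta>_def r_def using r1 r2 M K w by simp
  show ?thesis
  proof (rule exI[of _ \<delta>], intro conjI \<delta> exI[of _ "2 * K * M\<^sup>2 / norm (\<Phi> p)"] allI impI)
    fix t :: real assume t: "0 < t \<and> t < \<delta>"
    then have "t * M < r" "2 * K * M\<^sup>2 * t \<le> norm (\<Phi> p)"
      using M K unfolding \<delta>_def by (simp_all add: field_simps)
    then show "\<exists>q\<in>W. \<phi> q = 0 \<and> norm (q - p - t *\<^sub>R v) \<le> 2 * K * M\<^sup>2 / norm (\<Phi> p) * t\<^sup>2"
      using near[of t] taylor t ball unfolding M_def r_def by fastforce
  qed
qed

lemma tendsto_of_difference_quotient:
  fixes Q :: "real \<Rightarrow> 'a::real_normed_vector"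
  assumes "((\<lambda>t. (Q t - p) /\<^sub>R t) \<longlongrightarrow> v) (at_right 0)"
  shows "(Q \<longlongrightarrow> p) (at_right 0)"
proof -
  have "((\<lambda>t. p + t *\<^sub>R ((Q t - p) /\<^sub>R t)) \<longlongrightarrow> p + 0 *\<^sub>R v) (at_right 0)"
    by (intro tendsto_intros assms)
  moreover have "eventually (\<lambda>t. p + t *\<^sub>R ((Q t - p) /\<^sub>R t) = Q t) (at_right (0::real))"
    using eventually_at_right_less[of 0] by eventually_elim simp
  ultimately show ?thesis using Lim_transform_eventually by fastforce
qed

lemma tendsto_difference_quotient_along:
  fixes f :: "'a::real_normed_vector \<Rightarrow> 'b::real_normed_vector"
  assumes f: "(f has_derivative f') (at p)" and Q: "((\<lambda>t. (Q t - p) /\<^sub>R t) \<longlongrightarrow> v) (at_right 0)"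
  shows "((\<lambda>t. (f (Q t) - f p) /\<^sub>R t) \<longlongrightarrow> f' v) (at_right 0)"
proof -
  define R where "R y = (f y - f p - f' (y - p)) /\<^sub>R norm (y - p)" for y
  \<comment> \<open>\<open>R p = 0\<close> by division by zero, so \<open>R\<close> is continuous at \<open>p\<close> and the times with \<open>Q t = p\<close> need no
    separate treatment.\<close>
  have lin: "linear f'" using has_derivative_linear[OF f] .
  have "isCont R p"
    using f unfolding has_derivative_at_within isCont_def R_def by simp
  then have R: "((\<lambda>t. R (Q t)) \<longlongrightarrow> 0) (at_right 0)"
    using isCont_tendsto_compose[OF _ tendsto_of_difference_quotient[OF Q], of R]
    by (simp add: R_def)
  have "((\<lambda>t. f' ((Q t - p) /\<^sub>R t) + norm ((Q t - p) /\<^sub>R t) *\<^sub>R R (Q t)) \<longlongrightarrow> f' v + norm v *\<^sub>R 0)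
      (at_right 0)"
    by (intro tendsto_intros Q R bounded_linear.tendsto[OF has_derivative_bounded_linear[OF f]])
  moreover have "eventually (\<lambda>t. f' ((Q t - p) /\<^sub>R t) + norm ((Q t - p) /\<^sub>R t) *\<^sub>R R (Q t)
      = (f (Q t) - f p) /\<^sub>R t) (at_right (0::real))"
    using eventually_at_right_less[of 0]
  proof eventually_elim
    case (elim t)
    have "f (Q t) - f p = f' (Q t - p) + norm (Q t - p) *\<^sub>R R (Q t)"
      using lin by (cases "Q t = p") (auto simp: R_def linear_0)
    then show ?case
      using elim lin by (simp add: linear_scale scaleR_add_right divide_inverse_commute)
  qed
  ultimately show ?thesis using Lim_transform_eventually by fastforce
qed

lemma tendsto_second_difference_quotient_along:
  fixes \<psi> :: "'a::real_inner \<Rightarrow> real"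
  assumes W: "open W" "p \<in> W" and \<psi>: "\<And>x. x \<in> W \<Longrightarrow> (\<psi> has_derivative (\<lambda>h. \<Psi> x \<bullet> h)) (at x)"
    and \<Psi>: "(\<Psi> has_derivative \<Psi>') (at p)" and crit: "\<Psi> p = 0"
    and Q: "((\<lambda>t. (Q t - p) /\<^sub>R t) \<longlongrightarrow> v) (at_right 0)"
  shows "((\<lambda>t. (\<psi> (Q t) - \<psi> p) / t\<^sup>2) \<longlongrightarrow> (\<Psi>' v \<bullet> v) / 2) (at_right 0)"
proof -
  define R where "R y = (\<psi> y - \<psi> p - (\<Psi>' (y - p) \<bullet> (y - p)) / 2) / (norm (y - p))\<^sup>2" for y
  have lin: "linear \<Psi>'" using has_derivative_linear[OF \<Psi>] .
  have "(R \<longlongrightarrow> 0) (at p)"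
    using taylor2_remainder_tendsto[OF W \<psi> \<Psi>] crit unfolding R_def by simp
  then have "isCont R p" unfolding isCont_def by (simp add: R_def)
  then have R: "((\<lambda>t. R (Q t)) \<longlongrightarrow> 0) (at_right 0)"
    using isCont_tendsto_compose[OF _ tendsto_of_difference_quotient[OF Q], of R] by (simp add: R_def)
  have "((\<lambda>t. (\<Psi>' ((Q t - p) /\<^sub>R t) \<bullet> ((Q t - p) /\<^sub>R t)) / 2 + (norm ((Q t - p) /\<^sub>R t))\<^sup>2 * R (Q t))
      \<longlongrightarrow> (\<Psi>' v \<bullet> v) / 2 + (norm v)\<^sup>2 * 0) (at_right 0)"
    by (intro tendsto_intros Q R bounded_linear.tendsto[OF has_derivative_bounded_linear[OF \<Psi>]]) auto
  moreover have "eventually (\<lambda>t. (\<Psi>' ((Q t - p) /\<^sub>R t) \<bullet> ((Q t - p) /\<^sub>R t)) / 2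
      + (norm ((Q t - p) /\<^sub>R t))\<^sup>2 * R (Q t) = (\<psi> (Q t) - \<psi> p) / t\<^sup>2) (at_right (0::real))"
    using eventually_at_right_less[of 0]
  proof eventually_elim
    case (elim t)
    define y where "y = Q t - p"
    have "\<psi> (Q t) - \<psi> p = (\<Psi>' y \<bullet> y) / 2 + (norm y)\<^sup>2 * R (Q t)"
      using lin unfolding y_def by (cases "Q t = p") (auto simp: R_def linear_0)
    moreover have "\<Psi>' (y /\<^sub>R t) \<bullet> (y /\<^sub>R t) = (\<Psi>' y \<bullet> y) / t\<^sup>2"
      using lin by (simp add: linear_scale power2_eq_square divide_inverse)
    moreover have "(norm (y /\<^sub>R t))\<^sup>2 = (norm y)\<^sup>2 / t\<^sup>2"
      by (simp add: power_mult_distrib divide_inverse power_inverse)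
    ultimately show ?case
      unfolding y_def[symmetric] by (simp add: add_divide_distrib)
  qed
  ultimately show ?thesis using Lim_transform_eventually by fastforce
qed

lemma level_set_tangent_curve:
  fixes \<phi> :: "'a::real_inner \<Rightarrow> real"
  assumes "open W" "p \<in> W" "\<And>x. x \<in> W \<Longrightarrow> (\<phi> has_derivative (\<lambda>h. \<Phi> x \<bullet> h)) (at x)"
    and "(\<Phi> has_derivative \<Phi>') (at p)" "\<phi> p = 0" "\<Phi> p \<noteq> 0" "v \<bullet> \<Phi> p = 0"
  shows "\<exists>Q. eventually (\<lambda>t. Q t \<in> W \<and> \<phi> (Q t) = 0) (at_right 0)
    \<and> ((\<lambda>t. (Q t - p) /\<^sub>R t) \<longlongrightarrow> v) (at_right 0)"
proof -
  obtain \<delta> C where \<delta>: "\<delta> > 0"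
    and near: "\<And>t. 0 < t \<and> t < \<delta> \<Longrightarrow> \<exists>q\<in>W. \<phi> q = 0 \<and> norm (q - p - t *\<^sub>R v) \<le> C * t\<^sup>2"
    using level_set_near_tangent_line[OF assms] by blast
  define Q where "Q t = (SOME q. q \<in> W \<and> \<phi> q = 0 \<and> norm (q - p - t *\<^sub>R v) \<le> C * t\<^sup>2)" for t
  have "eventually (\<lambda>t. 0 < t \<and> t < \<delta>) (at_right (0::real))"
    unfolding eventually_at_right_field using \<delta> by blast
  then have Q: "eventually (\<lambda>t. 0 < t \<and> Q t \<in> W \<and> \<phi> (Q t) = 0 \<and> norm (Q t - p - t *\<^sub>R v) \<le> C * t\<^sup>2)
      (at_right 0)"
  proof eventually_elim
    case (elim t)
    from someI_ex[OF near[OF elim, unfolded Bex_def]] show ?case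
      using elim unfolding Q_def by blast
  qed
  have "((\<lambda>t. (Q t - p) /\<^sub>R t - v) \<longlongrightarrow> 0) (at_right 0)"
  proof (rule Lim_null_comparison)
    show "eventually (\<lambda>t. norm ((Q t - p) /\<^sub>R t - v) \<le> C * t) (at_right 0)"
      using Q
    proof eventually_elim
      case (elim t)
      then have "(Q t - p) /\<^sub>R t - v = (Q t - p - t *\<^sub>R v) /\<^sub>R t" by (simp add: algebra_simps)
      then have "norm ((Q t - p) /\<^sub>R t - v) = norm (Q t - p - t *\<^sub>R v) / t"
        using elim by (simp add: divide_inverse_commute)
      also have "\<dots> \<le> C * t\<^sup>2 / t" using elim by (intro divide_right_mono) auto
      finally show ?case using elim by (simp add: power2_eq_square)
    qed
    show "((\<lambda>t. C * t) \<longlongrightarrow> 0) (at_right 0)"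
      by (intro tendsto_eq_intros) auto
  qed
  then show ?thesis
    using Q by (intro exI[of _ Q] conjI) (auto elim: eventually_mono intro: LIM_zero_cancel)
qed

lemma lagrange_multiplier_at_max:
  fixes g \<phi> :: "'a::real_inner \<Rightarrow> real"
  assumes W: "open W" "p \<in> W" and \<phi>: "\<And>x. x \<in> W \<Longrightarrow> (\<phi> has_derivative (\<lambda>h. \<Phi> x \<bullet> h)) (at x)"
    and \<Phi>: "(\<Phi> has_derivative \<Phi>') (at p)" and \<phi>p: "\<phi> p = 0" and \<Phi>p: "\<Phi> p \<noteq> 0"
    and g: "(g has_derivative (\<lambda>h. G \<bullet> h)) (at p)"
    and max: "\<And>q. q \<in> W \<Longrightarrow> \<phi> q = 0 \<Longrightarrow> g q \<le> g p"
  shows "\<exists>m. G = m *\<^sub>R \<Phi> p"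
proof -
  have descent: "G \<bullet> v \<le> 0" if v: "v \<bullet> \<Phi> p = 0" for v
  proof -
    obtain Q where Q: "eventually (\<lambda>t. Q t \<in> W \<and> \<phi> (Q t) = 0) (at_right 0)"
      "((\<lambda>t. (Q t - p) /\<^sub>R t) \<longlongrightarrow> v) (at_right 0)"
      using level_set_tangent_curve[OF W \<phi> \<Phi> \<phi>p \<Phi>p v] by blast
    have "((\<lambda>t. (g (Q t) - g p) /\<^sub>R t) \<longlongrightarrow> G \<bullet> v) (at_right 0)"
      using tendsto_difference_quotient_along[OF g Q(2)] .
    moreover have "eventually (\<lambda>t. (g (Q t) - g p) /\<^sub>R t \<le> 0) (at_right 0)"
      using Q(1) eventually_at_right_less[of "0::real"]
      by eventually_elim (use max in \<open>auto simp: mult_nonneg_nonpos\<close>)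
    ultimately show ?thesis
      using tendsto_upperbound trivial_limit_at_right_real by blast
  qed
  define u where "u = G - ((G \<bullet> \<Phi> p) / (\<Phi> p \<bullet> \<Phi> p)) *\<^sub>R \<Phi> p"
  have u: "u \<bullet> \<Phi> p = 0" using \<Phi>p unfolding u_def by (simp add: inner_diff_left)
  have "u \<bullet> u = G \<bullet> u" using u unfolding u_def by (simp add: inner_diff_left inner_commute)
  also have "\<dots> = 0" using descent[OF u] descent[of "- u"] u by simp
  finally show ?thesis unfolding u_def by auto
qed

lemma lagrange_second_order_at_max:
  fixes g \<phi> :: "'a::real_inner \<Rightarrow> real"
  assumes W: "open W" "p \<in> W" and \<phi>: "\<And>x. x \<in> W \<Longrightarrow> (\<phi> has_derivative (\<lambda>h. \<Phi> x \<bullet> h)) (at x)"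
    and \<Phi>: "(\<Phi> has_derivative \<Phi>') (at p)" and \<phi>p: "\<phi> p = 0" and \<Phi>p: "\<Phi> p \<noteq> 0"
    and g: "\<And>x. x \<in> W \<Longrightarrow> (g has_derivative (\<lambda>h. G x \<bullet> h)) (at x)"
    and G: "(G has_derivative G') (at p)"
    and max: "\<And>q. q \<in> W \<Longrightarrow> \<phi> q = 0 \<Longrightarrow> g q \<le> g p"
    and multiplier: "G p = m *\<^sub>R \<Phi> p" and v: "v \<bullet> \<Phi> p = 0"
  shows "v \<bullet> G' v \<le> m * (v \<bullet> \<Phi>' v)"
proof -
  obtain Q where Q: "eventually (\<lambda>t. Q t \<in> W \<and> \<phi> (Q t) = 0) (at_right 0)"
    "((\<lambda>t. (Q t - p) /\<^sub>R t) \<longlongrightarrow> v) (at_right 0)"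
    using level_set_tangent_curve[OF W \<phi> \<Phi> \<phi>p \<Phi>p v] by blast
  define \<psi> where "\<psi> x = g x - m * \<phi> x" for x
  define \<Psi> where "\<Psi> x = G x - m *\<^sub>R \<Phi> x" for x
  have \<psi>: "(\<psi> has_derivative (\<lambda>h. \<Psi> x \<bullet> h)) (at x)" if "x \<in> W" for x
    unfolding \<psi>_def[abs_def] \<Psi>_def using g[OF that] \<phi>[OF that]
    by (auto intro!: derivative_eq_intros simp: inner_diff_left)
  have \<Psi>: "(\<Psi> has_derivative (\<lambda>h. G' h - m *\<^sub>R \<Phi>' h)) (at p)"
    unfolding \<Psi>_def[abs_def] by (intro derivative_intros G \<Phi>)
  have "((\<lambda>t. (\<psi> (Q t) - \<psi> p) / t\<^sup>2) \<longlongrightarrow> ((G' v - m *\<^sub>R \<Phi>' v) \<bullet> v) / 2) (at_right 0)"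
    using tendsto_second_difference_quotient_along[OF W \<psi> \<Psi> _ Q(2)] multiplier
    by (simp add: \<Psi>_def)
  moreover have "eventually (\<lambda>t. (\<psi> (Q t) - \<psi> p) / t\<^sup>2 \<le> 0) (at_right 0)"
    using Q(1) by eventually_elim (use max \<phi>p in \<open>auto simp: \<psi>_def divide_nonpos_nonneg\<close>)
  ultimately have "((G' v - m *\<^sub>R \<Phi>' v) \<bullet> v) / 2 \<le> 0"
    using tendsto_upperbound trivial_limit_at_right_real by blast
  then show ?thesis by (simp add: inner_diff_left inner_diff_right inner_commute)
qed

lemma inner_derivative_of_parallel_fields:
  fixes N \<Phi> :: "'a::real_inner \<Rightarrow> 'a"
  assumes Q: "((\<lambda>t. (Q t - p) /\<^sub>R t) \<longlongrightarrow> v) (at_right 0)"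
    and parallel: "eventually (\<lambda>t. \<exists>c. N (Q t) = c *\<^sub>R \<Phi> (Q t)) (at_right 0)"
    and N: "(N has_derivative N') (at p)" and \<Phi>: "(\<Phi> has_derivative \<Phi>') (at p)"
    and \<Phi>p: "\<Phi> p \<noteq> 0" and c0: "N p = c0 *\<^sub>R \<Phi> p" and v: "v \<bullet> \<Phi> p = 0"
  shows "v \<bullet> N' v = c0 * (v \<bullet> \<Phi>' v)"
proof -
  define c where "c t = (N (Q t) \<bullet> \<Phi> (Q t)) / (\<Phi> (Q t) \<bullet> \<Phi> (Q t))" for t
  have Qp: "(Q \<longlongrightarrow> p) (at_right 0)" using tendsto_of_difference_quotient[OF Q] .
  have \<Phi>Q: "((\<lambda>t. \<Phi> (Q t)) \<longlongrightarrow> \<Phi> p) (at_right 0)"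
    using isCont_tendsto_compose[OF has_derivative_continuous[OF \<Phi>] Qp] .
  have "(c \<longlongrightarrow> (N p \<bullet> \<Phi> p) / (\<Phi> p \<bullet> \<Phi> p)) (at_right 0)"
    unfolding c_def using \<Phi>p
    by (intro tendsto_intros \<Phi>Q isCont_tendsto_compose[OF has_derivative_continuous[OF N] Qp]) simp
  then have "((\<lambda>t. c t * (v \<bullet> ((\<Phi> (Q t) - \<Phi> p) /\<^sub>R t))) \<longlongrightarrow> c0 * (v \<bullet> \<Phi>' v)) (at_right 0)"
    using \<Phi>p unfolding c0
    by (intro tendsto_intros tendsto_difference_quotient_along[OF \<Phi> Q]) simp
  moreover have "eventually (\<lambda>t. c t * (v \<bullet> ((\<Phi> (Q t) - \<Phi> p) /\<^sub>R t)) = v \<bullet> ((N (Q t) - N p) /\<^sub>R t))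
      (at_right 0)"
    using parallel tendsto_imp_eventually_ne[OF \<Phi>Q \<Phi>p]
  proof eventually_elim
    case (elim t)
    then obtain a where a: "N (Q t) = a *\<^sub>R \<Phi> (Q t)" by blast
    then have "c t = a" using elim unfolding c_def by simp
    then show ?case using v a c0 by (simp add: inner_diff_right)
  qed
  ultimately have "((\<lambda>t. v \<bullet> ((N (Q t) - N p) /\<^sub>R t)) \<longlongrightarrow> c0 * (v \<bullet> \<Phi>' v)) (at_right 0)"
    using Lim_transform_eventually by fastforce
  moreover have "((\<lambda>t. v \<bullet> ((N (Q t) - N p) /\<^sub>R t)) \<longlongrightarrow> v \<bullet> N' v) (at_right 0)"
    by (intro tendsto_intros tendsto_difference_quotient_along[OF N Q])
  ultimately show ?thesis using tendsto_unique trivial_limit_at_right_real by blast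
qed

lemma normal_second_order_at_constrained_max:
  fixes g \<phi> :: "'a::real_inner \<Rightarrow> real"
  assumes W: "open W" "p \<in> W" and \<phi>: "\<And>x. x \<in> W \<Longrightarrow> (\<phi> has_derivative (\<lambda>h. \<Phi> x \<bullet> h)) (at x)"
    and \<Phi>: "(\<Phi> has_derivative \<Phi>') (at p)" and \<phi>p: "\<phi> p = 0" and \<Phi>p: "\<Phi> p \<noteq> 0"
    and g: "\<And>x. x \<in> W \<Longrightarrow> (g has_derivative (\<lambda>h. G x \<bullet> h)) (at x)"
    and G: "(G has_derivative G') (at p)"
    and max: "\<And>q. q \<in> W \<Longrightarrow> \<phi> q = 0 \<Longrightarrow> g q \<le> g p"
    and N: "(N has_derivative N') (at p)"
    and parallel: "\<And>q. q \<in> W \<Longrightarrow> \<phi> q = 0 \<Longrightarrow> \<exists>c. N q = c *\<^sub>R \<Phi> q"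
    and unit: "norm (N p) = 1" and v: "v \<bullet> N p = 0"
  shows "v \<bullet> G' v \<le> (N p \<bullet> G p) * (v \<bullet> N' v)"
proof -
  obtain m where m: "G p = m *\<^sub>R \<Phi> p"
    using lagrange_multiplier_at_max[OF W \<phi> \<Phi> \<phi>p \<Phi>p g[OF W(2)] max] by blast
  obtain c0 where c0: "N p = c0 *\<^sub>R \<Phi> p" using parallel[OF W(2) \<phi>p] by blast
  have v\<Phi>: "v \<bullet> \<Phi> p = 0" using v unit unfolding c0 by auto
  obtain Q where Q: "eventually (\<lambda>t. Q t \<in> W \<and> \<phi> (Q t) = 0) (at_right 0)"
    "((\<lambda>t. (Q t - p) /\<^sub>R t) \<longlongrightarrow> v) (at_right 0)"
    using level_set_tangent_curve[OF W \<phi> \<Phi> \<phi>p \<Phi>p v\<Phi>] by blast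
  have "eventually (\<lambda>t. \<exists>c. N (Q t) = c *\<^sub>R \<Phi> (Q t)) (at_right 0)"
    using Q(1) by eventually_elim (use parallel in blast)
  then have "v \<bullet> N' v = c0 * (v \<bullet> \<Phi>' v)"
    using inner_derivative_of_parallel_fields[OF Q(2) _ N \<Phi> \<Phi>p c0 v\<Phi>] by blast
  moreover have "v \<bullet> G' v \<le> m * (v \<bullet> \<Phi>' v)"
    using lagrange_second_order_at_max[OF W \<phi> \<Phi> \<phi>p \<Phi>p g G max m v\<Phi>] .
  moreover have "m = (N p \<bullet> G p) * c0"
  proof -
    have "N p \<bullet> N p = 1" using unit by (simp add: norm_eq_1)
    then have "c0\<^sup>2 * (\<Phi> p \<bullet> \<Phi> p) = 1"
      unfolding c0 by (simp add: power2_eq_square algebra_simps)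
    then show ?thesis unfolding c0 m by (simp add: algebra_simps power2_eq_square)
  qed
  ultimately show ?thesis by (simp add: mult.assoc)
qed

section \<open>Maximum principle on the hypersurface\<close>

lemma smooth_hypersurface_normalD:
  assumes "smooth_hypersurface_normal \<Gamma> N" "p \<in> \<Gamma>"
  shows "norm (N p) = 1" and "(\<lambda>y. N y $ k) differentiable (at p)"
proof -
  show "norm (N p) = 1" using assms unfolding smooth_hypersurface_normal_def by blast
  obtain U where "\<Gamma> \<subseteq> U" "smooth_field_on U N"
    using assms(1) unfolding smooth_hypersurface_normal_def by blast
  then show "(\<lambda>y. N y $ k) differentiable (at p)"
    using assms(2) smooth_on_imp_twice_differentiable_on(1) twice_differentiable_onD(1)
    unfolding smooth_field_on_def by blast
qed

lemma tangential_second_order_at_max: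
  fixes N :: "real^'n \<Rightarrow> real^'n"
  assumes hyp: "smooth_hypersurface_normal \<Gamma> N"
    and U: "open U" and g: "twice_differentiable_on U g"
    and p: "p \<in> \<Gamma>" "p \<in> U" and max: "\<And>y. y \<in> \<Gamma> \<Longrightarrow> g y \<le> g p"
    and v: "v \<bullet> N p = 0"
  shows "v \<bullet> (\<chi> i. grad (partial i g) p \<bullet> v)
    \<le> (N p \<bullet> grad g p) * (v \<bullet> (\<chi> k. grad (\<lambda>y. N y $ k) p \<bullet> v))"
proof -
  have "\<exists>V \<phi>. open V \<and> p \<in> V \<and> smooth_on V \<phi> \<and> (\<forall>x\<in>V. grad \<phi> x \<noteq> 0)
      \<and> \<Gamma> \<inter> V = {x\<in>V. \<phi> x = 0} \<and> (\<forall>x\<in>\<Gamma> \<inter> V. \<exists>c. N x = c *\<^sub>R grad \<phi> x)"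
    using hyp p(1) unfolding smooth_hypersurface_normal_def by blast
  then obtain V \<phi> where
    V: "open V" "p \<in> V" "smooth_on V \<phi>" "\<And>x. x \<in> V \<Longrightarrow> grad \<phi> x \<noteq> 0"
      "\<Gamma> \<inter> V = {x\<in>V. \<phi> x = 0}" "\<And>x. x \<in> \<Gamma> \<inter> V \<Longrightarrow> \<exists>c. N x = c *\<^sub>R grad \<phi> x"
    by blast
  define W where "W = U \<inter> V"
  have W: "open W" "p \<in> W" unfolding W_def using U V p by auto
  have on_\<Gamma>: "q \<in> \<Gamma> \<inter> V" if "q \<in> W" "\<phi> q = 0" for q
    using that V(5) unfolding W_def by blast
  have \<phi>2: "twice_differentiable_on V \<phi>"
    using smooth_on_imp_twice_differentiable_on(1)[OF V(3)] .
  have \<phi>: "(\<phi> has_derivative (\<lambda>h. grad \<phi> x \<bullet> h)) (at x)" if "x \<in> W" for x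
    using that twice_differentiable_onD(1)[OF \<phi>2] has_derivative_grad unfolding W_def by blast
  have \<Phi>: "(grad \<phi> has_derivative (\<lambda>h. \<chi> i. grad (partial i \<phi>) p \<bullet> h)) (at p)"
    using twice_differentiable_onD(2)[OF \<phi>2 V(2)] by (rule has_derivative_grad_field)
  have gd: "(g has_derivative (\<lambda>h. grad g x \<bullet> h)) (at x)" if "x \<in> W" for x
    using that twice_differentiable_onD(1)[OF g] has_derivative_grad unfolding W_def by blast
  have G: "(grad g has_derivative (\<lambda>h. \<chi> i. grad (partial i g) p \<bullet> h)) (at p)"
    using twice_differentiable_onD(2)[OF g p(2)] by (rule has_derivative_grad_field)
  have N: "(N has_derivative (\<lambda>h. \<chi> k. grad (\<lambda>y. N y $ k) p \<bullet> h)) (at p)"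
    using smooth_hypersurface_normalD(2)[OF hyp p(1)] by (rule has_derivative_vec_field)
  show ?thesis
  proof (rule normal_second_order_at_constrained_max[OF W \<phi> \<Phi> _ V(4)[OF V(2)] gd G _ N])
    show "\<phi> p = 0" using p(1) V(2,5) by blast
    show "g q \<le> g p" if "q \<in> W" "\<phi> q = 0" for q using max on_\<Gamma>[OF that] by blast
    show "\<exists>c. N q = c *\<^sub>R grad \<phi> q" if "q \<in> W" "\<phi> q = 0" for q using V(6) on_\<Gamma>[OF that] by blast
  qed (use smooth_hypersurface_normalD(1)[OF hyp p(1)] v in auto)
qed

lemma surf_lap_nonpos_at_max:
  fixes N :: "real^'n \<Rightarrow> real^'n"
  assumes hyp: "smooth_hypersurface_normal \<Gamma> N"
    and U: "open U" and g: "twice_differentiable_on U g"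
    and p: "p \<in> \<Gamma>" "p \<in> U" and max: "\<And>y. y \<in> \<Gamma> \<Longrightarrow> g y \<le> g p"
  shows "surf_lap N g p \<le> 0"
proof -
  let ?P = "tan_proj (N p)" and ?\<mu> = "N p \<bullet> grad g p"
  have nn: "N p \<bullet> N p = 1" using smooth_hypersurface_normalD(1)[OF hyp p(1)] by (simp add: norm_eq_1)
  \<comment> \<open>Summing the tangential second-order condition over the columns of the projection gives a trace.\<close>
  define e where "e a = (\<chi> i. ?P i a)" for a
  have "e a \<bullet> N p = 0" for a
    using tan_proj_normal[OF nn, of a] by (simp add: e_def inner_vec_def tan_proj_sym[of _ _ a])
  then have "(\<Sum>a\<in>UNIV. e a \<bullet> (\<chi> i. grad (partial i g) p \<bullet> e a)
      - ?\<mu> * (e a \<bullet> (\<chi> k. grad (\<lambda>y. N y $ k) p \<bullet> e a))) \<le> 0"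
    using tangential_second_order_at_max[OF hyp U g p max] by (intro sum_nonpos) auto
  moreover have "(\<Sum>a\<in>UNIV. e a \<bullet> (\<chi> i. grad (partial i g) p \<bullet> e a))
      = (\<Sum>i\<in>UNIV. \<Sum>j\<in>UNIV. ?P i j * partial i (partial j g) p)"
  proof -
    have "(\<Sum>a\<in>UNIV. e a \<bullet> (\<chi> i. grad (partial i g) p \<bullet> e a))
        = (\<Sum>i\<in>UNIV. \<Sum>j\<in>UNIV. ?P i j * partial j (partial i g) p)"
      using tan_proj_frame_sum[OF nn, of "\<lambda>i j. partial j (partial i g) p"]
      by (simp add: e_def inner_vec_def grad_def sum_distrib_left mult.assoc)
    also have "\<dots> = (\<Sum>i\<in>UNIV. \<Sum>j\<in>UNIV. ?P i j * partial i (partial j g) p)"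
      by (subst sum.swap) (simp add: tan_proj_sym)
    finally show ?thesis .
  qed
  moreover have "(\<Sum>a\<in>UNIV. e a \<bullet> (\<chi> k. grad (\<lambda>y. N y $ k) p \<bullet> e a)) = - mean_curv N p"
  proof -
    have "(\<Sum>a\<in>UNIV. e a \<bullet> (\<chi> k. grad (\<lambda>y. N y $ k) p \<bullet> e a))
        = (\<Sum>k\<in>UNIV. \<Sum>i\<in>UNIV. ?P k i * partial i (\<lambda>y. N y $ k) p)"
      using tan_proj_frame_sum[OF nn, of "\<lambda>k i. partial i (\<lambda>y. N y $ k) p"]
      by (simp add: e_def inner_vec_def grad_def sum_distrib_left mult.assoc)
    also have "\<dots> = - mean_curv N p"
      by (subst sum.swap) (simp add: mean_curv_eq tan_proj_sym)
    finally show ?thesis .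
  qed
  ultimately show ?thesis
    using surf_lap_eq[OF smooth_hypersurface_normalD(2)[OF hyp p(1)] twice_differentiable_onD(2)[OF g p(2)]
        smooth_hypersurface_normalD(1)[OF hyp p(1)]]
    by (simp add: sum_subtractf sum_distrib_left[symmetric] algebra_simps)
qed

theorem corollary2p6:
  fixes \<Gamma> :: "(real^'n) set" and N :: "real^'n \<Rightarrow> real^'n"
  assumes "CARD('n) \<ge> 2"
    and "compact \<Gamma>" and "\<Gamma> \<noteq> {}"
    and "smooth_hypersurface_normal \<Gamma> N"
  shows "\<not> (\<forall>x\<in>\<Gamma>. (x \<bullet> N x) / 4 = - surf_lap N (mean_curv N) x)"
proof
  assume profile: "\<forall>x\<in>\<Gamma>. (x \<bullet> N x) / 4 = - surf_lap N (mean_curv N) x"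
  obtain U where U: "open U" "\<Gamma> \<subseteq> U" "smooth_field_on U N"
    using assms(4) unfolding smooth_hypersurface_normal_def by blast
  let ?H = "mean_curv N"
  have H: "twice_differentiable_on U ?H" using twice_differentiable_on_mean_curv[OF U(1,3)] .
  have E: "twice_differentiable_on U (energy ?H)" using twice_differentiable_on_energy[OF U(1) H] .
  have "continuous_on \<Gamma> (energy ?H)"
    using U(2) twice_differentiable_onD(1)[OF E]
    by (intro continuous_at_imp_continuous_on ballI differentiable_imp_continuous_within) auto
  then obtain p where p: "p \<in> \<Gamma>" "\<And>y. y \<in> \<Gamma> \<Longrightarrow> energy ?H y \<le> energy ?H p"
    using continuous_attains_sup[OF assms(2,3)] by blast
  have pU: "p \<in> U" using p(1) U(2) by blast
  have "surf_lap N (energy ?H) p \<le> 0"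
    using surf_lap_nonpos_at_max[OF assms(4) U(1) E p(1) pU p(2)] .
  moreover have "surf_lap N (energy ?H) p = real CARD('n) - 1 + 4 * (norm (surf_grad N ?H p))\<^sup>2"
    using surf_lap_energy[OF U(1) H pU smooth_hypersurface_normalD(2,1)[OF assms(4) p(1)]] profile p(1)
    by (simp add: algebra_simps)
  moreover have "real CARD('n) - 1 \<ge> 1" using assms(1) by simp
  ultimately show False by (smt (verit) zero_le_power2)
qed

end
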